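(* Let $\varphi=(\mathfrak{m}_1,\dots,\mathfrak{m}_\ell)$ be normalizer-adapted. For every $1\le p\le\ell_0$ and $1\le i\le\ell$ we have $d_i=d_{\phi_p(i)}$ and $b_i=b_{\phi_p(i)}$.
   Context: $M=\mathsf{G}/\mathsf{H}$ almost-effective, $\mathsf{G},\mathsf{H}$ compact connected; $Q$ an $\mathrm{Ad}(\mathsf{G})$-invariant inner product on $\mathfrak{g}$, $\mathfrak{m}=\mathfrak{h}^{\perp_Q}$, $\mathfrak{m}_0=\{X\in\mathfrak{m}:[\mathfrak{h},X]=0\}$. $\varphi$ is an ordered $Q$-orthogonal decomposition of $\mathfrak{m}$ into irreducible $\mathrm{Ad}(\mathsf{H})$-modules with $\mathfrak{m}_0=\mathfrak{m}_1+\dots+\mathfrak{m}_{\ell_0}$, $\dim\mathfrak{m}_p=1$ for $p\le\ell_0$, $V_p\in\mathfrak{m}_p$ $Q$-unit. $d_i=\dim\mathfrak{m}_i$; $b_i\ge0$ is defined by $-\mathcal{B}_{\mathfrak{g}}|_{\mathfrak{m}_i\otimes\mathfrak{m}_i}=b_iQ|_{\mathfrak{m}_i\otimes\mathfrak{m}_i}$, $\mathcal{B}_{\mathfrak{g}}$ the Killing form. $[ijk]=\sum Q([e_\alpha,e_\beta],e_\gamma)^2$ over a $Q$-orthonormal adapted basis, $e_\alpha\in\mathfrak{m}_i$, $e_\beta\in\mathfrak{m}_j$, $e_\gamma\in\mathfrak{m}_k$. Normalizer-adapted: if $p\le\ell_0$ and $[\mathfrak{m}_p,\mathfrak{m}_i]\neq0$,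 then $[\mathfrak{m}_p,\mathfrak{m}_i]\cap\mathfrak{m}_j\neq0$ for some $j$. For such $\varphi$, let $I^0_p=\{i:\mathrm{ad}(V_p)|_{\mathfrak{m}_i}=0\}$, $I^+_p$ its complement; for $i\in I^+_p$ there is exactly one $j$ with $[pij]>0$, and $\phi_p(i)$ is defined as this $j$; $\phi_p(i)=i$ for $i\in I^0_p$. *)

theory Defs
  imports "HOL-Analysis.Analysis"
begin

text \<open>Lie-algebraic model: the Lie algebra g of G is a finite-dimensional real
inner product space 'g (inner product = Q) with a Lie bracket br.\<close>

definition lie_bracket :: "('g::euclidean_space \<Rightarrow> 'g \<Rightarrow> 'g) \<Rightarrow> bool" where
  "lie_bracket br \<longleftrightarrow> bilinear br \<and> (\<forall>X. br X X = 0) \<and>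
     (\<forall>X Y Z. br X (br Y Z) + br Y (br Z X) + br Z (br X Y) = 0)"

text \<open>Ad(G)-invariance of Q (G connected): ad(X) is Q-skew.\<close>
definition ad_invariant_ip :: "('g::euclidean_space \<Rightarrow> 'g \<Rightarrow> 'g) \<Rightarrow> bool" where
  "ad_invariant_ip br \<longleftrightarrow> (\<forall>X Y Z. br X Y \<bullet> Z = X \<bullet> br Y Z)"

definition subalgebra :: "('g::euclidean_space \<Rightarrow> 'g \<Rightarrow> 'g) \<Rightarrow> 'g set \<Rightarrow> bool" where
  "subalgebra br h \<longleftrightarrow> subspace h \<and> (\<forall>X\<in>h. \<forall>Y\<in>h. br X Y \<in> h)"

definition lie_ideal :: "('g::euclidean_space \<Rightarrow> 'g \<Rightarrow> 'g) \<Rightarrow> 'g set \<Rightarrow> bool" where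
  "lie_ideal br I \<longleftrightarrow> subspace I \<and> (\<forall>X. \<forall>Y\<in>I. br X Y \<in> I)"

definition almost_effective :: "('g::euclidean_space \<Rightarrow> 'g \<Rightarrow> 'g) \<Rightarrow> 'g set \<Rightarrow> bool" where
  "almost_effective br h \<longleftrightarrow> (\<forall>I. lie_ideal br I \<and> I \<subseteq> h \<longrightarrow> I = {0})"

definition ortho_compl :: "'g::euclidean_space set \<Rightarrow> 'g set" where
  "ortho_compl h = {X. \<forall>Y\<in>h. X \<bullet> Y = 0}"

definition h_invariant :: "('g::euclidean_space \<Rightarrow> 'g \<Rightarrow> 'g) \<Rightarrow> 'g set \<Rightarrow> 'g set \<Rightarrow> bool" where
  "h_invariant br h W \<longleftrightarrow> (\<forall>Y\<in>h. \<forall>X\<in>W. br Y X \<in> W)"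

text \<open>Irreducible Ad(H)-module (H connected: equivalently irreducible ad(h)-module).\<close>
definition irreducible_module :: "('g::euclidean_space \<Rightarrow> 'g \<Rightarrow> 'g) \<Rightarrow> 'g set \<Rightarrow> 'g set \<Rightarrow> bool" where
  "irreducible_module br h W \<longleftrightarrow> subspace W \<and> W \<noteq> {0} \<and> h_invariant br h W \<and>
     (\<forall>U. subspace U \<and> U \<subseteq> W \<and> h_invariant br h U \<longrightarrow> U = {0} \<or> U = W)"

definition killing :: "('g::euclidean_space \<Rightarrow> 'g \<Rightarrow> 'g) \<Rightarrow> 'g \<Rightarrow> 'g \<Rightarrow> real" where
  "killing br X Y = (\<Sum>b\<in>Basis. br X (br Y b) \<bullet> b)"

definition onb :: "'g::euclidean_space set \<Rightarrow> 'g set" where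
  "onb S = (SOME B. B \<subseteq> S \<and> pairwise orthogonal B \<and> (\<forall>x\<in>B. norm x = 1) \<and> span B = S)"

definition bcoef :: "('g::euclidean_space \<Rightarrow> 'g \<Rightarrow> 'g) \<Rightarrow> (nat \<Rightarrow> 'g set) \<Rightarrow> nat \<Rightarrow> nat \<Rightarrow> nat \<Rightarrow> real" where
  "bcoef br m i j k = (\<Sum>a\<in>onb (m i). \<Sum>b\<in>onb (m j). \<Sum>c\<in>onb (m k). (br a b \<bullet> c)^2)"

definition bscalar :: "('g::euclidean_space \<Rightarrow> 'g \<Rightarrow> 'g) \<Rightarrow> 'g set \<Rightarrow> real" where
  "bscalar br W = (THE b. \<forall>X\<in>W. \<forall>Y\<in>W. - killing br X Y = b * (X \<bullet> Y))"

definition bracket_space :: "('g::euclidean_space \<Rightarrow> 'g \<Rightarrow> 'g) \<Rightarrow> 'g set \<Rightarrow> 'g set \<Rightarrow> 'g set" where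
  "bracket_space br A B = span {br X Y | X Y. X \<in> A \<and> Y \<in> B}"

definition m0 :: "('g::euclidean_space \<Rightarrow> 'g \<Rightarrow> 'g) \<Rightarrow> 'g set \<Rightarrow> 'g set" where
  "m0 br h = {X \<in> ortho_compl h. \<forall>Y\<in>h. br Y X = 0}"

definition adapted_decomposition ::
  "('g::euclidean_space \<Rightarrow> 'g \<Rightarrow> 'g) \<Rightarrow> 'g set \<Rightarrow> nat \<Rightarrow> nat \<Rightarrow> (nat \<Rightarrow> 'g set) \<Rightarrow> bool" where
  "adapted_decomposition br h l l0 m \<longleftrightarrow> l0 \<le> l \<and>
     (\<forall>i\<in>{1..l}. irreducible_module br h (m i)) \<and>
     (\<forall>i\<in>{1..l}. \<forall>j\<in>{1..l}. i \<noteq> j \<longrightarrow> (\<forall>X\<in>m i. \<forall>Y\<in>m j. X \<bullet> Y = 0)) \<and>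
     span (\<Union>i\<in>{1..l}. m i) = ortho_compl h \<and>
     span (\<Union>i\<in>{1..l0}. m i) = m0 br h \<and>
     (\<forall>p\<in>{1..l0}. dim (m p) = 1)"

definition normalizer_adapted ::
  "('g::euclidean_space \<Rightarrow> 'g \<Rightarrow> 'g) \<Rightarrow> nat \<Rightarrow> nat \<Rightarrow> (nat \<Rightarrow> 'g set) \<Rightarrow> bool" where
  "normalizer_adapted br l l0 m \<longleftrightarrow>
     (\<forall>p\<in>{1..l0}. \<forall>i\<in>{1..l}. bracket_space br (m p) (m i) \<noteq> {0} \<longrightarrow>
        (\<exists>j\<in>{1..l}. bracket_space br (m p) (m i) \<inter> m j \<noteq> {0}))"

definition phi ::
  "('g::euclidean_space \<Rightarrow> 'g \<Rightarrow> 'g) \<Rightarrow> nat \<Rightarrow> (nat \<Rightarrow> 'g set) \<Rightarrow> (nat \<Rightarrow> 'g) \<Rightarrow> nat \<Rightarrow> nat \<Rightarrow> nat" where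
  "phi br l m V p i = (if (\<forall>X\<in>m i. br (V p) X = 0) then i
      else (THE j. j \<in> {1..l} \<and> bcoef br m p i j > 0))"

end

theory Submission
  imports Defs
begin

(* Since V_p lies in m_0, ad(V_p) commutes with ad(h), so by Schur's lemma it maps every m_i
   it does not annihilate isomorphically onto an irreducible summand; normalizer-adaptedness
   guarantees that this image is one of the m_j, and then [p i j] > 0 singles out j = phi_p(i).
   This gives d_i = d_j.  As ad(V_p) is Q-skew, Q([V_p,[V_p,X]], X) = -|[V_p,X]|^2 <> 0, so
   ad(V_p) maps m_j back onto m_i; ad-invariance of the Killing form then carries
   -B = b Q from m_i to m_j and back, whence b_i = b_j. *)

lemma lie_bracket_bilinear: "lie_bracket br \<Longrightarrow> bilinear br"
  by (simp add: lie_bracket_def)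

lemma lie_bracket_linear_right: "lie_bracket br \<Longrightarrow> linear (br X)"
  by (simp add: lie_bracket_def bilinear_def)

lemma lie_bracket_zero_right: "lie_bracket br \<Longrightarrow> br X 0 = 0"
  by (simp add: lie_bracket_linear_right linear_0)

lemma lie_bracket_antisym:
  assumes "lie_bracket br"
  shows "br X Y = - br Y X"
proof -
  have bil: "bilinear br"
    using assms by (rule lie_bracket_bilinear)
  have "br (X + Y) (X + Y) = 0" "br X X = 0" "br Y Y = 0"
    using assms by (auto simp: lie_bracket_def)
  then have "br X Y + br Y X = 0"
    by (simp add: bilinear_ladd[OF bil] bilinear_radd[OF bil] add.commute)
  then show ?thesis
    by (simp add: eq_neg_iff_add_eq_0)
qed

lemma lie_bracket_derivation:
  assumes "lie_bracket br"
  shows "br (br V X) Z = br V (br X Z) - br X (br V Z)"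
proof -
  have "br V (br X Z) + br X (br Z V) + br Z (br V X) = 0"
    using assms by (simp add: lie_bracket_def)
  moreover have "br X (br Z V) = - br X (br V Z)"
    using lie_bracket_antisym[OF assms, of Z V] linear_neg[OF lie_bracket_linear_right[OF assms]]
    by simp
  moreover have "br Z (br V X) = - br (br V X) Z"
    by (rule lie_bracket_antisym[OF assms])
  ultimately show ?thesis
    by (simp add: algebra_simps)
qed

lemma lie_bracket_zero_left: "lie_bracket br \<Longrightarrow> br 0 X = 0"
  using lie_bracket_antisym[of br 0 X] by (simp add: lie_bracket_zero_right)

lemma inner_ad_skew:
  assumes "lie_bracket br" and "ad_invariant_ip br"
  shows "br V X \<bullet> Z = - (X \<bullet> br V Z)"
  using assms lie_bracket_antisym[OF assms(1), of V X] by (simp add: ad_invariant_ip_def)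

lemma trace_comp_commute:
  fixes A B :: "'g::euclidean_space \<Rightarrow> 'g"
  assumes "linear A" "linear B"
  shows "(\<Sum>b\<in>Basis. A (B b) \<bullet> b) = (\<Sum>b\<in>Basis. B (A b) \<bullet> b)"
proof -
  have expand: "(\<Sum>b\<in>Basis. F (G b) \<bullet> b) = (\<Sum>b\<in>Basis. \<Sum>c\<in>Basis. (G b \<bullet> c) * (F c \<bullet> b))"
    if "linear F" for F G :: "'g \<Rightarrow> 'g"
  proof (rule sum.cong[OF refl])
    fix b :: 'g
    have "F (G b) = F (\<Sum>c\<in>Basis. (G b \<bullet> c) *\<^sub>R c)"
      by (simp add: euclidean_representation)
    also have "\<dots> = (\<Sum>c\<in>Basis. (G b \<bullet> c) *\<^sub>R F c)"
      using that by (simp add: linear_sum linear_scale)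
    finally show "F (G b) \<bullet> b = (\<Sum>c\<in>Basis. (G b \<bullet> c) * (F c \<bullet> b))"
      by (simp add: inner_sum_left)
  qed
  show ?thesis
    unfolding expand[OF assms(1)] expand[OF assms(2)]
    by (subst sum.swap) (simp add: mult.commute)
qed

lemma killing_ad_skew:
  assumes "lie_bracket br"
  shows "killing br (br V X) Y = - killing br X (br V Y)"
proof -
  have lin: "linear (br Z)" for Z
    using assms by (rule lie_bracket_linear_right)
  have "killing br (br V X) Y
      = (\<Sum>b\<in>Basis. br V (br X (br Y b)) \<bullet> b) - (\<Sum>b\<in>Basis. br X (br V (br Y b)) \<bullet> b)"
    unfolding killing_def lie_bracket_derivation[OF assms]
    by (simp add: inner_diff_left sum_subtractf)
  moreover have "killing br X (br V Y)
      = (\<Sum>b\<in>Basis. br X (br V (br Y b)) \<bullet> b) - (\<Sum>b\<in>Basis. br X (br Y (br V b)) \<bullet> b)"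
    unfolding killing_def lie_bracket_derivation[OF assms]
    by (simp add: linear_diff[OF lin] inner_diff_left sum_subtractf)
  moreover have "(\<Sum>b\<in>Basis. br V (br X (br Y b)) \<bullet> b) = (\<Sum>b\<in>Basis. br X (br Y (br V b)) \<bullet> b)"
    using trace_comp_commute[OF lin linear_compose[OF lin lin], of V X Y] by (simp add: o_def)
  ultimately show ?thesis
    by simp
qed

definition killing_proportional :: "('g::euclidean_space \<Rightarrow> 'g \<Rightarrow> 'g) \<Rightarrow> 'g set \<Rightarrow> real \<Rightarrow> bool" where
  "killing_proportional br W b \<longleftrightarrow> (\<forall>X\<in>W. \<forall>Y\<in>W. - killing br X Y = b * (X \<bullet> Y))"

lemma killing_proportional_ad_image:
  assumes lb: "lie_bracket br" and ip: "ad_invariant_ip br"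
    and img: "br V ` A = C" and img_back: "br V ` C \<subseteq> A"
    and proportional: "killing_proportional br A b"
  shows "killing_proportional br C b"
  unfolding killing_proportional_def
proof (intro ballI)
  fix Y Y' assume "Y \<in> C" "Y' \<in> C"
  then obtain X X' where X: "X \<in> A" "Y = br V X" and X': "X' \<in> A" "Y' = br V X'"
    using img by auto
  have "br V (br V X') \<in> A"
    using img_back img X' by auto
  then have "- killing br X (br V (br V X')) = b * (X \<bullet> br V (br V X'))"
    using proportional X(1) unfolding killing_proportional_def by blast
  moreover have "killing br Y Y' = - killing br X (br V (br V X'))"
    unfolding X(2) X'(2) by (rule killing_ad_skew[OF lb])
  moreover have "Y \<bullet> Y' = - (X \<bullet> br V (br V X'))"
    unfolding X(2) X'(2) by (rule inner_ad_skew[OF lb ip])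
  ultimately show "- killing br Y Y' = b * (Y \<bullet> Y')"
    by simp
qed

lemma bscalar_eq_of_ad_swap:
  assumes "lie_bracket br" and "ad_invariant_ip br"
    and "br V ` A = C" and "br V ` C = A"
  shows "bscalar br A = bscalar br C"
proof -
  have "killing_proportional br A b \<longleftrightarrow> killing_proportional br C b" for b
    using killing_proportional_ad_image[OF assms(1,2)] assms(3,4) by (metis order_refl)
  then show ?thesis
    unfolding bscalar_def killing_proportional_def[symmetric] by simp
qed

definition h_equivariant :: "('g::euclidean_space \<Rightarrow> 'g \<Rightarrow> 'g) \<Rightarrow> 'g set \<Rightarrow> ('g \<Rightarrow> 'g) \<Rightarrow> bool" where
  "h_equivariant br h f \<longleftrightarrow> (\<forall>Y\<in>h. \<forall>X. br Y (f X) = f (br Y X))"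

lemma ad_h_equivariant:
  assumes "lie_bracket br" and "\<forall>Y\<in>h. br Y V = 0"
  shows "h_equivariant br h (br V)"
  unfolding h_equivariant_def
proof (intro ballI allI)
  fix Y X assume "Y \<in> h"
  then have "br (br Y V) X = 0"
    using assms lie_bracket_zero_left by simp
  then show "br Y (br V X) = br V (br Y X)"
    using lie_bracket_derivation[OF assms(1), of Y V X] by simp
qed

lemma h_invariant_image:
  assumes "h_equivariant br h f" and "h_invariant br h W"
  shows "h_invariant br h (f ` W)"
  unfolding h_invariant_def
proof (intro ballI)
  fix Y Z assume Y: "Y \<in> h" and "Z \<in> f ` W"
  then obtain X where X: "X \<in> W" and Z: "Z = f X"
    by blast
  have "br Y Z = f (br Y X)"
    using assms(1) Y unfolding Z h_equivariant_def by blast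
  moreover have "br Y X \<in> W"
    using assms(2) Y X unfolding h_invariant_def by blast
  ultimately show "br Y Z \<in> f ` W"
    by simp
qed

lemma h_invariant_preimage:
  assumes "h_equivariant br h f" and "h_invariant br h W" and "h_invariant br h W'"
  shows "h_invariant br h {X \<in> W. f X \<in> W'}"
  unfolding h_invariant_def
proof (intro ballI)
  fix Y X assume Y: "Y \<in> h" and X: "X \<in> {X \<in> W. f X \<in> W'}"
  have "br Y X \<in> W" and "br Y (f X) \<in> W'"
    using assms(2,3) Y X unfolding h_invariant_def by auto
  moreover have "br Y (f X) = f (br Y X)"
    using assms(1) Y unfolding h_equivariant_def by blast
  ultimately show "br Y X \<in> {X \<in> W. f X \<in> W'}"
    by simp
qed

lemma irreducible_module_eqI:
  assumes "irreducible_module br h W"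
    and "subspace U" "U \<subseteq> W" "h_invariant br h U" "U \<noteq> {0}"
  shows "U = W"
  using assms unfolding irreducible_module_def by blast

lemma subspace_linear_preimage_on:
  assumes "linear f" and "subspace W" and "subspace W'"
  shows "subspace {X \<in> W. f X \<in> W'}"
proof -
  have "{X \<in> W. f X \<in> W'} = W \<inter> {X. f X \<in> W'}"
    by blast
  then show ?thesis
    using subspace_inter[OF assms(2) linear_subspace_linear_preimage[OF assms(1,3)]] by simp
qed

lemma equivariant_image_irreducible:
  assumes f: "linear f" "h_equivariant br h f"
    and W: "irreducible_module br h W" and W': "irreducible_module br h W'"
    and meet: "f ` W \<inter> W' \<noteq> {0}"
  shows "f ` W = W'"
proof -
  have sub: "subspace W" "subspace W'" and inv: "h_invariant br h W" "h_invariant br h W'"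
    using W W' by (auto simp: irreducible_module_def)
  obtain X where X: "X \<in> W" "f X \<in> W'" "f X \<noteq> 0"
  proof -
    have "0 \<in> f ` W \<inter> W'"
      using subspace_0[OF sub(1)] subspace_0[OF sub(2)] linear_0[OF f(1)] by (metis IntI image_eqI)
    then have "\<exists>Z\<in>f ` W \<inter> W'. Z \<noteq> 0"
      using meet by auto
    then show ?thesis
      using that by auto
  qed
  have "{X \<in> W. f X \<in> W'} = W"
  proof (rule irreducible_module_eqI[OF W])
    show "subspace {X \<in> W. f X \<in> W'}"
      by (rule subspace_linear_preimage_on[OF f(1) sub])
    show "h_invariant br h {X \<in> W. f X \<in> W'}"
      by (rule h_invariant_preimage[OF f(2) inv])
    show "{X \<in> W. f X \<in> W'} \<noteq> {0}"
    proof -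
      have "X \<noteq> 0"
        using X(3) linear_0[OF f(1)] by auto
      then show ?thesis
        using X(1,2) by blast
    qed
  qed blast
  then have "f ` W \<subseteq> W'"
    by blast
  show ?thesis
  proof (rule irreducible_module_eqI[OF W'])
    show "subspace (f ` W)"
      by (rule linear_subspace_image[OF f(1) sub(1)])
    show "h_invariant br h (f ` W)"
      by (rule h_invariant_image[OF f(2) inv(1)])
    show "f ` W \<noteq> {0}"
      using X by blast
  qed fact
qed

lemma equivariant_inj_on_irreducible:
  assumes lb: "lie_bracket br" and f: "linear f" "h_equivariant br h f"
    and W: "irreducible_module br h W" and nz: "X \<in> W" "f X \<noteq> 0"
  shows "inj_on f W"
proof -
  have sub: "subspace W" and inv: "h_invariant br h W"
    using W by (auto simp: irreducible_module_def)
  have "h_invariant br h {0}"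
    using lie_bracket_zero_right[OF lb] by (simp add: h_invariant_def)
  then have "h_invariant br h {X \<in> W. f X \<in> {0}}"
    by (rule h_invariant_preimage[OF f(2) inv])
  moreover have "subspace {X \<in> W. f X \<in> {0}}"
    by (rule subspace_linear_preimage_on[OF f(1) sub subspace_single_0])
  moreover have "{X \<in> W. f X \<in> {0}} \<noteq> W"
    using nz by blast
  ultimately have "{X \<in> W. f X \<in> {0}} = {0}"
    using irreducible_module_eqI[OF W] by blast
  then show ?thesis
    using linear_inj_on_iff_eq_0[OF f(1) sub] by blast
qed

lemma onb_subspace:
  assumes "subspace S"
  shows "onb S \<subseteq> S" "span (onb S) = S" "finite (onb S)"
proof -
  have "\<exists>B. B \<subseteq> S \<and> pairwise orthogonal B \<and> (\<forall>x\<in>B. norm x = 1) \<and> span B = S"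
    using orthonormal_basis_subspace[OF assms] by metis
  then have "onb S \<subseteq> S \<and> pairwise orthogonal (onb S) \<and> span (onb S) = S"
    unfolding onb_def by (rule someI2_ex) blast
  then show "onb S \<subseteq> S" "span (onb S) = S" "finite (onb S)"
    using pairwise_orthogonal_imp_finite by blast+
qed

lemma bilinear_inner_right:
  assumes "bilinear br"
  shows "bilinear (\<lambda>X Y. br X Y \<bullet> Z)"
  using assms unfolding bilinear_def linear_iff by (simp add: inner_add_left)

lemma bcoef_pos_iff:
  assumes br: "bilinear br"
    and sub: "subspace (m i)" "subspace (m j)" "subspace (m k)"
  shows "0 < bcoef br m i j k \<longleftrightarrow> (\<exists>X\<in>m i. \<exists>Y\<in>m j. \<exists>Z\<in>m k. br X Y \<bullet> Z \<noteq> 0)"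
proof -
  note onb_i = onb_subspace[OF sub(1)] and onb_j = onb_subspace[OF sub(2)]
    and onb_k = onb_subspace[OF sub(3)]
  have "bcoef br m i j k = 0 \<longleftrightarrow>
      (\<forall>a\<in>onb (m i). \<forall>b\<in>onb (m j). \<forall>c\<in>onb (m k). br a b \<bullet> c = 0)"
    unfolding bcoef_def using onb_i(3) onb_j(3) onb_k(3)
    by (simp add: sum_nonneg_eq_0_iff sum_nonneg)
  also have "\<dots> \<longleftrightarrow> (\<forall>X\<in>m i. \<forall>Y\<in>m j. \<forall>Z\<in>m k. br X Y \<bullet> Z = 0)"
  proof
    assume basis: "\<forall>a\<in>onb (m i). \<forall>b\<in>onb (m j). \<forall>c\<in>onb (m k). br a b \<bullet> c = 0"
    show "\<forall>X\<in>m i. \<forall>Y\<in>m j. \<forall>Z\<in>m k. br X Y \<bullet> Z = 0"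
    proof (intro ballI)
      fix X Y Z assume XYZ: "X \<in> m i" "Y \<in> m j" "Z \<in> m k"
      have zero: "bilinear (\<lambda>_ _. 0 :: real)"
        by (simp add: bilinear_def linear_zero)
      have "orthogonal (br X Y) c" if "c \<in> onb (m k)" for c
        using bilinear_eq[OF bilinear_inner_right[OF br] zero, of "m i" "onb (m i)"
            "m j" "onb (m j)" X Y] onb_i(2) onb_j(2) XYZ basis that
        unfolding orthogonal_def by blast
      then show "br X Y \<bullet> Z = 0"
        using orthogonal_to_span XYZ(3) onb_k(2) unfolding orthogonal_def by blast
    qed
  qed (use onb_i(1) onb_j(1) onb_k(1) in blast)
  finally have "bcoef br m i j k = 0 \<longleftrightarrow> (\<forall>X\<in>m i. \<forall>Y\<in>m j. \<forall>Z\<in>m k. br X Y \<bullet> Z = 0)" .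
  moreover have "0 \<le> bcoef br m i j k"
    unfolding bcoef_def by (simp add: sum_nonneg)
  ultimately show ?thesis
    by (auto simp: less_le)
qed

lemma adapted_decomposition_irreducible:
  "adapted_decomposition br h l l0 m \<Longrightarrow> i \<in> {1..l} \<Longrightarrow> irreducible_module br h (m i)"
  by (simp add: adapted_decomposition_def)

lemma adapted_decomposition_subspace:
  "adapted_decomposition br h l l0 m \<Longrightarrow> i \<in> {1..l} \<Longrightarrow> subspace (m i)"
  by (meson adapted_decomposition_irreducible irreducible_module_def)

lemma adapted_decomposition_orthogonal:
  assumes "adapted_decomposition br h l l0 m"
    and "i \<in> {1..l}" "j \<in> {1..l}" "i \<noteq> j" "X \<in> m i" "Y \<in> m j"
  shows "X \<bullet> Y = 0"
  using assms unfolding adapted_decomposition_def by blast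

lemma adapted_decomposition_centralized:
  assumes "adapted_decomposition br h l l0 m" and "p \<in> {1..l0}" and "V \<in> m p"
  shows "\<forall>Y\<in>h. br Y V = 0"
proof -
  have "V \<in> span (\<Union>i\<in>{1..l0}. m i)"
    using assms(2,3) by (blast intro: span_base)
  then have "V \<in> m0 br h"
    using assms(1) by (simp add: adapted_decomposition_def)
  then show ?thesis
    by (simp add: m0_def)
qed

lemma adapted_decomposition_line:
  assumes AD: "adapted_decomposition br h l l0 m" and p: "p \<in> {1..l0}"
    and V: "V \<in> m p" "V \<noteq> 0"
  shows "m p = span {V}"
proof (rule subspace_dim_equal[symmetric])
  have "p \<in> {1..l}"
    using AD p by (auto simp: adapted_decomposition_def)
  then show sub: "subspace (m p)"
    by (rule adapted_decomposition_subspace[OF AD])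
  show "span {V} \<subseteq> m p"
    using V(1) sub by (simp add: span_minimal)
  show "dim (m p) \<le> dim (span {V})"
    using AD p V(2) by (simp add: adapted_decomposition_def dim_span dim_singleton)
qed simp

lemma bracket_space_span_singleton:
  assumes "bilinear br" and "subspace W"
  shows "bracket_space br (span {V}) W = br V ` W"
proof -
  have "{br X Y | X Y. X \<in> span {V} \<and> Y \<in> W} = br V ` W"
  proof (intro equalityI subsetI)
    fix Z assume "Z \<in> {br X Y | X Y. X \<in> span {V} \<and> Y \<in> W}"
    then obtain t Y where "Y \<in> W" and "Z = br (t *\<^sub>R V) Y"
      by (auto simp: span_singleton)
    then have "t *\<^sub>R Y \<in> W" and "Z = br V (t *\<^sub>R Y)"
      using assms by (simp_all add: subspace_scale bilinear_lmul bilinear_rmul)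
    then show "Z \<in> br V ` W"
      by blast
  qed (auto intro: span_base)
  moreover have "subspace (br V ` W)"
    using assms by (simp add: linear_subspace_image bilinear_def)
  ultimately show ?thesis
    by (simp add: bracket_space_def)
qed

lemma normalizer_adapted_ad_image:
  assumes lb: "lie_bracket br" and AD: "adapted_decomposition br h l l0 m"
    and NA: "normalizer_adapted br l l0 m" and p: "p \<in> {1..l0}" and V: "V \<in> m p"
    and q: "q \<in> {1..l}" and X: "X \<in> m q" "br V X \<noteq> 0"
  shows "\<exists>k\<in>{1..l}. br V ` m q = m k"
proof -
  have "V \<noteq> 0"
    using X(2) lie_bracket_zero_left[OF lb] by auto
  then have bracket: "bracket_space br (m p) (m q) = br V ` m q"
    using adapted_decomposition_line[OF AD p V] bracket_space_span_singleton
      lie_bracket_bilinear[OF lb] adapted_decomposition_subspace[OF AD q] by simp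
  then have "bracket_space br (m p) (m q) \<noteq> {0}"
    using X by blast
  then obtain k where k: "k \<in> {1..l}" and "bracket_space br (m p) (m q) \<inter> m k \<noteq> {0}"
    using NA p q unfolding normalizer_adapted_def by blast
  then have "br V ` m q = m k"
    using bracket equivariant_image_irreducible[OF lie_bracket_linear_right[OF lb]
        ad_h_equivariant[OF lb adapted_decomposition_centralized[OF AD p V]]
        adapted_decomposition_irreducible[OF AD q] adapted_decomposition_irreducible[OF AD k]]
    by blast
  then show ?thesis
    using k by blast
qed

lemma dim_ad_image:
  assumes lb: "lie_bracket br" and AD: "adapted_decomposition br h l l0 m"
    and p: "p \<in> {1..l0}" and V: "V \<in> m p" and i: "i \<in> {1..l}"
    and img: "br V ` m i = W" and X: "X \<in> m i" "br V X \<noteq> 0"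
  shows "dim W = dim (m i)"
proof -
  have span_eq: "span (m i) = m i"
    using adapted_decomposition_subspace[OF AD i] by (simp add: span_eq_iff)
  have "inj_on (br V) (span (m i))"
    unfolding span_eq using equivariant_inj_on_irreducible[OF lb lie_bracket_linear_right[OF lb]
        ad_h_equivariant[OF lb adapted_decomposition_centralized[OF AD p V]]
        adapted_decomposition_irreducible[OF AD i] X] .
  then show ?thesis
    unfolding img[symmetric] by (rule dim_image_eq[OF lie_bracket_linear_right[OF lb]])
qed

lemma phi_eq_ad_image:
  assumes lb: "lie_bracket br" and AD: "adapted_decomposition br h l l0 m"
    and p: "p \<in> {1..l0}" and V: "V p \<in> m p"
    and i: "i \<in> {1..l}" and k: "k \<in> {1..l}" and img: "br (V p) ` m i = m k"
    and X: "X \<in> m i" "br (V p) X \<noteq> 0"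
  shows "phi br l m V p i = k"
proof -
  have "V p \<noteq> 0"
    using X(2) lie_bracket_zero_left[OF lb] by auto
  then have line: "m p = span {V p}"
    by (rule adapted_decomposition_line[OF AD p V])
  have sub: "subspace (m j)" if "j \<in> {1..l}" for j
    using adapted_decomposition_subspace[OF AD that] .
  have bracket_in: "br A B \<in> m k" if A: "A \<in> m p" and B: "B \<in> m i" for A B
  proof -
    obtain t where "A = t *\<^sub>R V p"
      using A unfolding line span_singleton by blast
    then have "br A B = t *\<^sub>R br (V p) B"
      by (simp add: bilinear_lmul[OF lie_bracket_bilinear[OF lb]])
    moreover have "br (V p) B \<in> m k"
      using B img by blast
    ultimately show ?thesis
      by (simp add: subspace_scale[OF sub[OF k]])
  qed
  have pos_iff: "0 < bcoef br m p i j \<longleftrightarrow> j = k" if j: "j \<in> {1..l}" for j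
  proof -
    have "p \<in> {1..l}"
      using AD p by (auto simp: adapted_decomposition_def)
    then have "0 < bcoef br m p i j \<longleftrightarrow> (\<exists>A\<in>m p. \<exists>B\<in>m i. \<exists>C\<in>m j. br A B \<bullet> C \<noteq> 0)"
      by (intro bcoef_pos_iff lie_bracket_bilinear[OF lb] sub i j)
    also have "\<dots> \<longleftrightarrow> j = k"
    proof
      assume "\<exists>A\<in>m p. \<exists>B\<in>m i. \<exists>C\<in>m j. br A B \<bullet> C \<noteq> 0"
      then show "j = k"
        using adapted_decomposition_orthogonal[OF AD k j] bracket_in by blast
    next
      assume "j = k"
      moreover have "br (V p) X \<in> m k"
        using X(1) img by blast
      moreover have "br (V p) X \<bullet> br (V p) X \<noteq> 0"
        using X(2) by simp
      ultimately show "\<exists>A\<in>m p. \<exists>B\<in>m i. \<exists>C\<in>m j. br A B \<bullet> C \<noteq> 0"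
        using V X(1) by blast
    qed
    finally show ?thesis .
  qed
  have "\<not> (\<forall>X\<in>m i. br (V p) X = 0)"
    using X by blast
  then have "phi br l m V p i = (THE j. j \<in> {1..l} \<and> 0 < bcoef br m p i j)"
    unfolding phi_def by (rule if_not_P)
  also have "\<dots> = k"
    using pos_iff k by (intro the_equality) auto
  finally show ?thesis .
qed

lemma ad_image_back:
  assumes lb: "lie_bracket br" and ip: "ad_invariant_ip br"
    and AD: "adapted_decomposition br h l l0 m" and NA: "normalizer_adapted br l l0 m"
    and p: "p \<in> {1..l0}" and V: "V \<in> m p"
    and i: "i \<in> {1..l}" and k: "k \<in> {1..l}" and img: "br V ` m i = m k"
    and X: "X \<in> m i" "br V X \<noteq> 0"
  shows "br V ` m k = m i"
proof -
  define Y where "Y = br V X"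
  have Y: "Y \<in> m k"
    unfolding Y_def using X(1) img by blast
  have skew: "br V Y \<bullet> X \<noteq> 0"
    using inner_ad_skew[OF lb ip, of V Y X] X(2) unfolding Y_def by simp
  then obtain k' where k': "k' \<in> {1..l}" and img': "br V ` m k = m k'"
    using normalizer_adapted_ad_image[OF lb AD NA p V k Y] by fastforce
  have "br V Y \<in> m k'"
    using Y img' by blast
  then have "k' = i"
    using adapted_decomposition_orthogonal[OF AD k' i _ _ X(1)] skew by blast
  then show ?thesis
    using img' by simp
qed

theorem lemma5p3:
  fixes br :: "'g::euclidean_space \<Rightarrow> 'g \<Rightarrow> 'g"
    and h :: "'g set" and m :: "nat \<Rightarrow> 'g set" and V :: "nat \<Rightarrow> 'g"
    and l l0 p i :: nat
  assumes "lie_bracket br"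
    and "ad_invariant_ip br"
    and "subalgebra br h"
    and "almost_effective br h"
    and "adapted_decomposition br h l l0 m"
    and "\<forall>q\<in>{1..l0}. V q \<in> m q \<and> norm (V q) = 1"
    and "normalizer_adapted br l l0 m"
    and "p \<in> {1..l0}" and "i \<in> {1..l}"
  shows "dim (m i) = dim (m (phi br l m V p i)) \<and>
         bscalar br (m i) = bscalar br (m (phi br l m V p i))"
proof (cases "\<forall>X\<in>m i. br (V p) X = 0")
  case True
  then show ?thesis
    by (simp add: phi_def)
next
  case False
  note lb = assms(1) and ip = assms(2) and AD = assms(5) and NA = assms(7)
    and p = assms(8) and i = assms(9)
  have V: "V p \<in> m p"
    using assms(6) p by blast
  obtain X where X: "X \<in> m i" "br (V p) X \<noteq> 0"
    using False by blast
  obtain k where k: "k \<in> {1..l}" and img: "br (V p) ` m i = m k"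
    using normalizer_adapted_ad_image[OF lb AD NA p V i X] by blast
  have "dim (m k) = dim (m i)"
    by (rule dim_ad_image[OF lb AD p V i img X])
  moreover have "bscalar br (m i) = bscalar br (m k)"
    using bscalar_eq_of_ad_swap[OF lb ip img ad_image_back[OF lb ip AD NA p V i k img X]] .
  moreover have "phi br l m V p i = k"
    by (rule phi_eq_ad_image[where V = V, OF lb AD p V i k img X])
  ultimately show ?thesis
    by simp
qed

end
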